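(* Let $(A,B)$ be a $3\times 3$ bimatrix game which is zero-sum, satisfies $a_{ij}\neq a_{i'j}$ and $b_{ij}\ne b_{ij'}$ for all $i\ne i'$, $j\ne j'$, and has a unique Nash equilibrium, which lies in the interior of $\Sigma_A\times\Sigma_B$. Then: (1) the transition diagram of $(A,B)$ has no alternating cycles; (2) the transition diagram has no sinks; (3) the transition diagram has no sources.
   Context: $\Sigma_A$, $\Sigma_B$ are the simplices of probability row, resp. column, vectors in $\mathbb{R}^3$; $\mathrm{BR}_A(q)=\operatorname{argmax}_{p\in\Sigma_A}pAq$, $\mathrm{BR}_B(p)=\operatorname{argmax}_{q\in\Sigma_B}pBq$; a Nash equilibrium is $(\bar p,\bar q)$ with $\bar p\in\mathrm{BR}_A(\bar q)$, $\bar q\in\mathrm{BR}_B(\bar p)$. The game is zero-sum if there are $e,g>0$, $f_j,h_i\in\mathbb{R}$ such that $C=(e a_{ij}+f_j)$ and $D=(g b_{ij}+h_i)$ satisfy $C+D=0$. The transition diagram: for $i\ne i'$, $(i,j)\to(i',j)$ iff $a_{i'j}>a_{ij}$; for $j\ne j'$, $(i,j)\to(i,j')$ iff $b_{ij'}>b_{ij}$. A cell $(i,j)$ is a sink if $(i',j)\to(i,j)$ and $(i,j')\to(i,j)$ for all $i'\ne i,j'\ne j$, and a source if all these arrows point out of $(i,j)$. An alternating cycle is a sequence of cells $(i_0,j_0),\dots,(i_n,j_n)=(i_0,j_0)$, consecutive ones differing in exactly one coordinate, such that either $(i_k,j_k)\to(i_{k+1},j_{k+1})$ whenever $i_k\ne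 i_{k+1}$ and $(i_{k+1},j_{k+1})\to(i_k,j_k)$ whenever $j_k\ne j_{k+1}$, or the same with both directions reversed. *)

theory Defs
  imports "HOL-Analysis.Analysis"
begin

text \<open>3x3 bimatrix games. Payoff matrices are real^3^3 (entry M$i$j, row i, column j);
mixed strategies are vectors in real^3.\<close>

type_synonym mat3 = "real^3^3"
type_synonym cell = "3 \<times> 3"

definition simplex3 :: "(real^3) set" where
  "simplex3 = {p. (\<forall>i. 0 \<le> p$i) \<and> (\<Sum>i\<in>UNIV. p$i) = 1}"

definition payoff :: "mat3 \<Rightarrow> real^3 \<Rightarrow> real^3 \<Rightarrow> real" where
  "payoff M p q = (\<Sum>i\<in>UNIV. \<Sum>j\<in>UNIV. p$i * M$i$j * q$j)"

definition BR_A :: "mat3 \<Rightarrow> real^3 \<Rightarrow> (real^3) set" where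
  "BR_A A q = {p \<in> simplex3. \<forall>p'\<in>simplex3. payoff A p' q \<le> payoff A p q}"

definition BR_B :: "mat3 \<Rightarrow> real^3 \<Rightarrow> (real^3) set" where
  "BR_B B p = {q \<in> simplex3. \<forall>q'\<in>simplex3. payoff B p q' \<le> payoff B p q}"

definition nash :: "mat3 \<Rightarrow> mat3 \<Rightarrow> real^3 \<Rightarrow> real^3 \<Rightarrow> bool" where
  "nash A B p q \<longleftrightarrow> p \<in> simplex3 \<and> q \<in> simplex3 \<and> p \<in> BR_A A q \<and> q \<in> BR_B B p"

definition zero_sum :: "mat3 \<Rightarrow> mat3 \<Rightarrow> bool" where
  "zero_sum A B \<longleftrightarrow> (\<exists>e g (f::3 \<Rightarrow> real) (h::3 \<Rightarrow> real). e > 0 \<and> g > 0 \<and>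
     (\<forall>i j. (e * A$i$j + f j) + (g * B$i$j + h i) = 0))"

definition arrow :: "mat3 \<Rightarrow> mat3 \<Rightarrow> cell \<Rightarrow> cell \<Rightarrow> bool" where
  "arrow A B c d \<longleftrightarrow>
     (fst c \<noteq> fst d \<and> snd c = snd d \<and> A$(fst d)$(snd c) > A$(fst c)$(snd c)) \<or>
     (fst c = fst d \<and> snd c \<noteq> snd d \<and> B$(fst c)$(snd d) > B$(fst c)$(snd c))"

definition is_sink :: "mat3 \<Rightarrow> mat3 \<Rightarrow> cell \<Rightarrow> bool" where
  "is_sink A B c \<longleftrightarrow>
     (\<forall>i'. i' \<noteq> fst c \<longrightarrow> arrow A B (i', snd c) c) \<and>
     (\<forall>j'. j' \<noteq> snd c \<longrightarrow> arrow A B (fst c, j') c)"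

definition is_source :: "mat3 \<Rightarrow> mat3 \<Rightarrow> cell \<Rightarrow> bool" where
  "is_source A B c \<longleftrightarrow>
     (\<forall>i'. i' \<noteq> fst c \<longrightarrow> arrow A B c (i', snd c)) \<and>
     (\<forall>j'. j' \<noteq> snd c \<longrightarrow> arrow A B c (fst c, j'))"

definition adjacent :: "cell \<Rightarrow> cell \<Rightarrow> bool" where
  "adjacent c d \<longleftrightarrow> (fst c \<noteq> fst d \<and> snd c = snd d) \<or> (fst c = fst d \<and> snd c \<noteq> snd d)"

definition alternating_cycle :: "mat3 \<Rightarrow> mat3 \<Rightarrow> nat \<Rightarrow> (nat \<Rightarrow> cell) \<Rightarrow> bool" where
  "alternating_cycle A B n c \<longleftrightarrow> 1 \<le> n \<and> c n = c 0 \<and>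
     (\<forall>k<n. adjacent (c k) (c (Suc k))) \<and>
     ((\<forall>k<n. (fst (c k) \<noteq> fst (c (Suc k)) \<longrightarrow> arrow A B (c k) (c (Suc k))) \<and>
             (snd (c k) \<noteq> snd (c (Suc k)) \<longrightarrow> arrow A B (c (Suc k)) (c k))) \<or>
      (\<forall>k<n. (fst (c k) \<noteq> fst (c (Suc k)) \<longrightarrow> arrow A B (c (Suc k)) (c k)) \<and>
             (snd (c k) \<noteq> snd (c (Suc k)) \<longrightarrow> arrow A B (c k) (c (Suc k)))))"

end

theory Submission
  imports Defs
begin

text \<open>In a zero-sum game the affinely rescaled payoff \<open>\<Phi> = e A + f\<close> of the row player is a
  potential that the row player strictly increases and the column player strictly decreases.
  Along an alternating cycle every step therefore moves \<open>\<Phi>\<close> in the same direction, which is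
  impossible for a closed path. At an equilibrium \<open>(p, q)\<close> with full support both players are
  indifferent between their pure strategies, so every row of \<open>\<Phi>\<close> has \<open>q\<close>-average and every
  column has \<open>p\<close>-average equal to the value \<open>p \<Phi> q\<close>. A sink is a cell maximal in its column
  and minimal in its row, so it lies strictly above its column average and strictly below
  its row average, a contradiction; a source is the same configuration for \<open>-\<Phi>\<close>.\<close>

lemma le_weighted_average_imp_eq:
  fixes w r :: "'i::finite \<Rightarrow> real"
  assumes pos: "\<And>i. 0 < w i" and sum1: "sum w UNIV = 1"
    and le: "\<And>i. r i \<le> (\<Sum>i'\<in>UNIV. w i' * r i')"
  shows "r k = (\<Sum>i\<in>UNIV. w i * r i)"
proof -
  define v where "v = (\<Sum>i\<in>UNIV. w i * r i)"
  have "(\<Sum>i\<in>UNIV. w i * (v - r i)) = v * sum w UNIV - v"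
    by (simp add: right_diff_distrib sum_subtractf sum_distrib_right[symmetric] v_def mult.commute)
  then have "(\<Sum>i\<in>UNIV. w i * (v - r i)) = 0"
    using sum1 by simp
  moreover have "\<forall>i\<in>UNIV. 0 \<le> w i * (v - r i)"
    using le pos by (simp add: v_def less_imp_le)
  ultimately have "w k * (v - r k) = 0"
    by (simp add: sum_nonneg_eq_0_iff)
  then show ?thesis
    using pos[of k] by (simp add: v_def)
qed

lemma weighted_average_less:
  fixes w u :: "'i::finite \<Rightarrow> real"
  assumes pos: "\<And>i. 0 < w i" and sum1: "sum w UNIV = 1"
    and other: "i1 \<noteq> k" and less: "\<And>i. i \<noteq> k \<Longrightarrow> u i < u k"
  shows "(\<Sum>i\<in>UNIV. w i * u i) < u k"
proof -
  have "(\<Sum>i\<in>UNIV. w i * u i) < (\<Sum>i\<in>UNIV. w i * u k)"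
  proof (rule sum_strict_mono_ex1)
    show "\<forall>i\<in>UNIV. w i * u i \<le> w i * u k"
      using less pos by (metis less_eq_real_def mult_left_mono)
    show "\<exists>i\<in>UNIV. w i * u i < w i * u k"
      using less[OF other] pos[of i1] by (intro bexI[of _ i1]) auto
  qed simp
  also have "\<dots> = u k"
    using sum1 by (simp add: sum_distrib_right[symmetric])
  finally show ?thesis .
qed

lemma weighted_average_greater:
  fixes w u :: "'i::finite \<Rightarrow> real"
  assumes "\<And>i. 0 < w i" and "sum w UNIV = 1"
    and "i1 \<noteq> k" and "\<And>i. i \<noteq> k \<Longrightarrow> u k < u i"
  shows "u k < (\<Sum>i\<in>UNIV. w i * u i)"
  using weighted_average_less[of w i1 k "\<lambda>i. - u i"] assms by (simp add: sum_negf)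

lemma row_average_eq_column_average:
  fixes p :: "'i::finite \<Rightarrow> real" and q :: "'j::finite \<Rightarrow> real" and M :: "'i \<Rightarrow> 'j \<Rightarrow> real"
  assumes "sum p UNIV = 1" "sum q UNIV = 1"
    and row: "\<And>a. (\<Sum>b\<in>UNIV. M a b * q b) = r" and col: "\<And>b. (\<Sum>a\<in>UNIV. p a * M a b) = c"
  shows "r = c"
proof -
  have "r = (\<Sum>a\<in>UNIV. p a * (\<Sum>b\<in>UNIV. M a b * q b))"
    using assms(1) by (simp add: row sum_distrib_right[symmetric])
  also have "\<dots> = (\<Sum>b\<in>UNIV. q b * (\<Sum>a\<in>UNIV. p a * M a b))"
    unfolding sum_distrib_left by (subst sum.swap) (simp add: mult_ac)
  also have "\<dots> = c"
    using assms(2) by (simp add: col sum_distrib_right[symmetric])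
  finally show ?thesis .
qed

lemma exists_other_3: "\<exists>x::3. x \<noteq> k"
  by (metis zero_neq_one)

lemma simplex3_sum: "p \<in> simplex3 \<Longrightarrow> (\<Sum>i\<in>UNIV. p$i) = 1"
  by (simp add: simplex3_def)

lemma axis_in_simplex3: "axis k 1 \<in> simplex3"
  by (auto simp: simplex3_def axis_def)

lemma payoff_eq_row_sums: "payoff M p q = (\<Sum>i\<in>UNIV. p$i * (\<Sum>j\<in>UNIV. M$i$j * q$j))"
  unfolding payoff_def by (simp add: sum_distrib_left mult.assoc)

lemma payoff_eq_column_sums: "payoff M p q = (\<Sum>j\<in>UNIV. q$j * (\<Sum>i\<in>UNIV. p$i * M$i$j))"
  unfolding payoff_def by (subst sum.swap) (simp add: sum_distrib_left mult_ac)

lemma payoff_axis_left: "payoff M (axis k 1) q = (\<Sum>j\<in>UNIV. M$k$j * q$j)"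
  by (simp add: payoff_eq_row_sums axis_def if_distrib[of "\<lambda>x. x * _"] cong: if_cong)

lemma payoff_axis_right: "payoff M p (axis k 1) = (\<Sum>i\<in>UNIV. p$i * M$i$k)"
  by (simp add: payoff_eq_column_sums axis_def if_distrib[of "\<lambda>x. x * _"] cong: if_cong)

lemma BR_A_interior_indifferent:
  assumes "p \<in> BR_A A q" and "\<forall>i. 0 < p$i"
  shows "(\<Sum>j\<in>UNIV. A$k$j * q$j) = payoff A p q"
proof -
  have "payoff A (axis i 1) q \<le> payoff A p q" for i
    using assms(1) axis_in_simplex3 by (auto simp: BR_A_def)
  then have "(\<Sum>j\<in>UNIV. A$i$j * q$j) \<le> (\<Sum>i'\<in>UNIV. p$i' * (\<Sum>j\<in>UNIV. A$i'$j * q$j))" for i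
    unfolding payoff_axis_left payoff_eq_row_sums[of A p q] .
  moreover have "sum (($) p) UNIV = 1"
    using assms(1) by (simp add: BR_A_def simplex3_sum)
  ultimately show ?thesis
    unfolding payoff_eq_row_sums
    using le_weighted_average_imp_eq[of "($) p" "\<lambda>i. \<Sum>j\<in>UNIV. A$i$j * q$j"] assms(2) by blast
qed

lemma BR_B_interior_indifferent:
  assumes "q \<in> BR_B B p" and "\<forall>j. 0 < q$j"
  shows "(\<Sum>i\<in>UNIV. p$i * B$i$k) = payoff B p q"
proof -
  have "payoff B p (axis j 1) \<le> payoff B p q" for j
    using assms(1) axis_in_simplex3 by (auto simp: BR_B_def)
  then have "(\<Sum>i\<in>UNIV. p$i * B$i$j) \<le> (\<Sum>j'\<in>UNIV. q$j' * (\<Sum>i\<in>UNIV. p$i * B$i$j'))" for j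
    unfolding payoff_axis_right payoff_eq_column_sums[of B p q] .
  moreover have "sum (($) q) UNIV = 1"
    using assms(1) by (simp add: BR_B_def simplex3_sum)
  ultimately show ?thesis
    unfolding payoff_eq_column_sums
    using le_weighted_average_imp_eq[of "($) q" "\<lambda>j. \<Sum>i\<in>UNIV. p$i * B$i$j"] assms(2) by blast
qed

definition ordinal_potential :: "mat3 \<Rightarrow> mat3 \<Rightarrow> (cell \<Rightarrow> real) \<Rightarrow> bool" where
  "ordinal_potential A B \<Phi> \<longleftrightarrow>
     (\<forall>i i' j. A$i$j < A$i'$j \<longleftrightarrow> \<Phi> (i, j) < \<Phi> (i', j)) \<and>
     (\<forall>i j j'. B$i$j < B$i$j' \<longleftrightarrow> \<Phi> (i, j') < \<Phi> (i, j))"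

definition zero_sum_potential :: "mat3 \<Rightarrow> mat3 \<Rightarrow> (cell \<Rightarrow> real) \<Rightarrow> bool" where
  "zero_sum_potential A B \<Phi> \<longleftrightarrow> (\<exists>e g (f::3 \<Rightarrow> real) (h::3 \<Rightarrow> real). e > 0 \<and> g > 0 \<and>
     (\<forall>i j. \<Phi> (i, j) = e * A$i$j + f j \<and> \<Phi> (i, j) = - (g * B$i$j + h i)))"

lemma zero_sum_potential_exists:
  assumes "zero_sum A B"
  obtains \<Phi> where "zero_sum_potential A B \<Phi>"
proof -
  obtain e g and f h :: "3 \<Rightarrow> real" where "e > 0" "g > 0"
    and sum0: "\<And>i j. (e * A$i$j + f j) + (g * B$i$j + h i) = 0"
    using assms unfolding zero_sum_def by blast
  moreover have "e * A$i$j + f j = - (g * B$i$j + h i)" for i j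
    using sum0[of i j] by linarith
  ultimately have "zero_sum_potential A B (\<lambda>(i, j). e * A$i$j + f j)"
    unfolding zero_sum_potential_def
    by (intro exI[of _ e] exI[of _ g] exI[of _ f] exI[of _ h]) simp
  then show ?thesis ..
qed

lemma zero_sum_potential_ordinal:
  assumes "zero_sum_potential A B \<Phi>"
  shows "ordinal_potential A B \<Phi>"
proof -
  obtain e g and f h :: "3 \<Rightarrow> real" where "e > 0" "g > 0"
    and \<Phi>: "\<forall>i j. \<Phi> (i, j) = e * A$i$j + f j \<and> \<Phi> (i, j) = - (g * B$i$j + h i)"
    using assms unfolding zero_sum_potential_def by blast
  have \<Phi>_A: "\<Phi> (i, j) = e * A$i$j + f j" and \<Phi>_B: "\<Phi> (i, j) = - (g * B$i$j + h i)" for i j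
    using \<Phi> by blast+
  have "A$i$j < A$i'$j \<longleftrightarrow> \<Phi> (i, j) < \<Phi> (i', j)" for i i' j
    using \<open>e > 0\<close> by (simp only: \<Phi>_A) simp
  moreover have "B$i$j < B$i$j' \<longleftrightarrow> \<Phi> (i, j') < \<Phi> (i, j)" for i j j'
    using \<open>g > 0\<close> by (simp only: \<Phi>_B) simp
  ultimately show ?thesis
    unfolding ordinal_potential_def by blast
qed

lemma zero_sum_potential_averages_eq:
  assumes pot: "zero_sum_potential A B \<Phi>" and ne: "nash A B p q"
    and p_pos: "\<forall>i. 0 < p$i" and q_pos: "\<forall>j. 0 < q$j"
  shows "(\<Sum>j\<in>UNIV. \<Phi> (a, j) * q$j) = (\<Sum>i\<in>UNIV. p$i * \<Phi> (i, b))"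
proof -
  obtain e g and f h :: "3 \<Rightarrow> real"
    where \<Phi>: "\<forall>i j. \<Phi> (i, j) = e * A$i$j + f j \<and> \<Phi> (i, j) = - (g * B$i$j + h i)"
    using pot unfolding zero_sum_potential_def by blast
  have \<Phi>_A: "\<Phi> (i, j) = e * A$i$j + f j" and \<Phi>_B: "\<Phi> (i, j) = - (g * B$i$j + h i)" for i j
    using \<Phi> by blast+
  have row: "(\<Sum>j\<in>UNIV. \<Phi> (a', j) * q$j) = e * payoff A p q + (\<Sum>j\<in>UNIV. f j * q$j)" for a'
  proof -
    have "(\<Sum>j\<in>UNIV. \<Phi> (a', j) * q$j) = e * (\<Sum>j\<in>UNIV. A$a'$j * q$j) + (\<Sum>j\<in>UNIV. f j * q$j)"
      by (simp add: \<Phi>_A algebra_simps sum.distrib sum_distrib_left)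
    then show ?thesis
      using BR_A_interior_indifferent[of p A q a'] ne p_pos by (simp add: nash_def)
  qed
  have col: "(\<Sum>i\<in>UNIV. p$i * \<Phi> (i, b')) = - (g * payoff B p q + (\<Sum>i\<in>UNIV. p$i * h i))" for b'
  proof -
    have "p$i * \<Phi> (i, b') = - (g * (p$i * B$i$b') + p$i * h i)" for i
      by (simp add: \<Phi>_B algebra_simps)
    then have "(\<Sum>i\<in>UNIV. p$i * \<Phi> (i, b')) = - (g * (\<Sum>i\<in>UNIV. p$i * B$i$b') + (\<Sum>i\<in>UNIV. p$i * h i))"
      by (simp add: sum_subtractf sum_negf sum_distrib_left)
    then show ?thesis
      using BR_B_interior_indifferent[of q B p b'] ne q_pos by (simp add: nash_def)
  qed
  have "e * payoff A p q + (\<Sum>j\<in>UNIV. f j * q$j) = - (g * payoff B p q + (\<Sum>i\<in>UNIV. p$i * h i))"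
  proof (rule row_average_eq_column_average[of "($) p" "($) q" "\<lambda>i j. \<Phi> (i, j)"])
    show "sum (($) p) UNIV = 1" "sum (($) q) UNIV = 1"
      using ne by (auto simp: nash_def simplex3_sum)
  qed (simp_all only: row col)
  then show ?thesis
    by (simp add: row col)
qed

lemma ordinal_potential_column_less:
  "ordinal_potential A B \<Phi> \<Longrightarrow> A$i$j < A$i'$j \<Longrightarrow> \<Phi> (i, j) < \<Phi> (i', j)"
  unfolding ordinal_potential_def by blast

lemma ordinal_potential_row_less:
  "ordinal_potential A B \<Phi> \<Longrightarrow> B$i$j < B$i$j' \<Longrightarrow> \<Phi> (i, j') < \<Phi> (i, j)"
  unfolding ordinal_potential_def by blast

lemma ordinal_potential_arrow_row:
  assumes "ordinal_potential A B \<Phi>" and "arrow A B x y" and "fst x \<noteq> fst y"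
  shows "\<Phi> x < \<Phi> y"
proof -
  obtain i j i' where "x = (i, j)" "y = (i', j)" and "A$i$j < A$i'$j"
    using assms(2,3) by (cases x; cases y) (auto simp: arrow_def)
  then show ?thesis
    using ordinal_potential_column_less[OF assms(1)] by simp
qed

lemma ordinal_potential_arrow_column:
  assumes "ordinal_potential A B \<Phi>" and "arrow A B x y" and "snd x \<noteq> snd y"
  shows "\<Phi> y < \<Phi> x"
proof -
  obtain i j j' where "x = (i, j)" "y = (i, j')" and "B$i$j < B$i$j'"
    using assms(2,3) by (cases x; cases y) (auto simp: arrow_def)
  then show ?thesis
    using ordinal_potential_row_less[OF assms(1)] by simp
qed

lemma alternating_cycle_potential_monotone:
  assumes pot: "ordinal_potential A B \<Phi>" and cyc: "alternating_cycle A B n c"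
  shows "(\<forall>k<n. \<Phi> (c k) < \<Phi> (c (Suc k))) \<or> (\<forall>k<n. \<Phi> (c (Suc k)) < \<Phi> (c k))"
proof -
  have step: "\<Phi> x < \<Phi> y"
    if "adjacent x y" "fst x \<noteq> fst y \<longrightarrow> arrow A B x y" "snd x \<noteq> snd y \<longrightarrow> arrow A B y x"
    for x y
  proof (cases "fst x = fst y")
    case True
    then have "snd x \<noteq> snd y"
      using that(1) by (auto simp: adjacent_def)
    moreover have "arrow A B y x"
      using that(3) calculation by blast
    ultimately show ?thesis
      using ordinal_potential_arrow_column[OF pot, of y x] by auto
  next
    case False
    then show ?thesis
      using that(2) ordinal_potential_arrow_row[OF pot, of x y] by blast
  qed
  have adj: "adjacent (c k) (c (Suc k))" and adj': "adjacent (c (Suc k)) (c k)" if "k < n" for k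
    using cyc that by (auto simp: alternating_cycle_def adjacent_def)
  from cyc consider
      (forward) "\<forall>k<n. (fst (c k) \<noteq> fst (c (Suc k)) \<longrightarrow> arrow A B (c k) (c (Suc k))) \<and>
                       (snd (c k) \<noteq> snd (c (Suc k)) \<longrightarrow> arrow A B (c (Suc k)) (c k))"
    | (backward) "\<forall>k<n. (fst (c (Suc k)) \<noteq> fst (c k) \<longrightarrow> arrow A B (c (Suc k)) (c k)) \<and>
                       (snd (c (Suc k)) \<noteq> snd (c k) \<longrightarrow> arrow A B (c k) (c (Suc k)))"
    unfolding alternating_cycle_def by (auto simp: eq_commute)
  then show ?thesis
  proof cases
    case forward
    then show ?thesis
      using step[OF adj] by blast
  next
    case backward
    then show ?thesis
      using step[OF adj'] by blast
  qed
qed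

lemma ordinal_potential_no_alternating_cycle:
  assumes pot: "ordinal_potential A B \<Phi>"
  shows "\<not> alternating_cycle A B n c"
proof
  assume cyc: "alternating_cycle A B n c"
  then have "0 < n" and closed: "c n = c 0"
    by (auto simp: alternating_cycle_def)
  have no_increasing_loop: "\<not> (\<forall>k<n. u k < u (Suc k))" if "u n = u 0" for u :: "nat \<Rightarrow> real"
  proof
    assume "\<forall>k<n. u k < u (Suc k)"
    then have "\<And>k. k \<in> {..<n} \<Longrightarrow> u k < u (Suc k)"
      by simp
    then have "u 0 < u n"
      by (rule lift_Suc_mono_less_ivl[of "{..<n}" u 0 n]) (auto simp: \<open>0 < n\<close>)
    with that show False
      by simp
  qed
  from alternating_cycle_potential_monotone[OF pot cyc] show False
  proof
    assume "\<forall>k<n. \<Phi> (c k) < \<Phi> (c (Suc k))"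
    with no_increasing_loop[of "\<lambda>k. \<Phi> (c k)"] closed show False
      by simp
  next
    assume "\<forall>k<n. \<Phi> (c (Suc k)) < \<Phi> (c k)"
    with no_increasing_loop[of "\<lambda>k. - \<Phi> (c k)"] closed show False
      by simp
  qed
qed

lemma ordinal_potential_sink:
  assumes "ordinal_potential A B \<Phi>" and "is_sink A B (i, j)"
  shows "\<And>i'. i' \<noteq> i \<Longrightarrow> \<Phi> (i', j) < \<Phi> (i, j)"
    and "\<And>j'. j' \<noteq> j \<Longrightarrow> \<Phi> (i, j) < \<Phi> (i, j')"
  using assms(2) ordinal_potential_arrow_row[OF assms(1)] ordinal_potential_arrow_column[OF assms(1)]
  by (auto simp: is_sink_def)

lemma ordinal_potential_source:
  assumes "ordinal_potential A B \<Phi>" and "is_source A B (i, j)"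
  shows "\<And>i'. i' \<noteq> i \<Longrightarrow> \<Phi> (i, j) < \<Phi> (i', j)"
    and "\<And>j'. j' \<noteq> j \<Longrightarrow> \<Phi> (i, j') < \<Phi> (i, j)"
  using assms(2) ordinal_potential_arrow_row[OF assms(1)] ordinal_potential_arrow_column[OF assms(1)]
  by (auto simp: is_source_def)

lemma no_strict_saddle_cell:
  fixes \<Phi> :: "cell \<Rightarrow> real"
  assumes p: "\<forall>i. 0 < p$i" "(\<Sum>i\<in>UNIV. p$i) = 1" and q: "\<forall>j. 0 < q$j" "(\<Sum>j\<in>UNIV. q$j) = 1"
    and avg: "(\<Sum>j'\<in>UNIV. \<Phi> (i, j') * q$j') = (\<Sum>i'\<in>UNIV. p$i' * \<Phi> (i', j))"
    and col_max: "\<And>i'. i' \<noteq> i \<Longrightarrow> \<Phi> (i', j) < \<Phi> (i, j)"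
    and row_min: "\<And>j'. j' \<noteq> j \<Longrightarrow> \<Phi> (i, j) < \<Phi> (i, j')"
  shows False
proof -
  obtain i1 j1 where "i1 \<noteq> i" "j1 \<noteq> j"
    using exists_other_3 by metis
  then have "(\<Sum>i'\<in>UNIV. p$i' * \<Phi> (i', j)) < \<Phi> (i, j)" "\<Phi> (i, j) < (\<Sum>j'\<in>UNIV. q$j' * \<Phi> (i, j'))"
    using weighted_average_less[of "($) p" i1 i "\<lambda>i'. \<Phi> (i', j)"]
      weighted_average_greater[of "($) q" j1 j "\<lambda>j'. \<Phi> (i, j')"] p q col_max row_min
    by auto
  then show False
    using avg by (simp add: mult.commute)
qed

lemma zero_sum_interior_nash_no_sink:
  assumes pot: "zero_sum_potential A B \<Phi>" and ne: "nash A B p q"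
    and p_pos: "\<forall>i. 0 < p$i" and q_pos: "\<forall>j. 0 < q$j"
  shows "\<not> is_sink A B (i, j)"
proof
  assume "is_sink A B (i, j)"
  moreover have "(\<Sum>i\<in>UNIV. p$i) = 1" "(\<Sum>j\<in>UNIV. q$j) = 1"
    using ne by (auto simp: nash_def simplex3_sum)
  ultimately show False
    using no_strict_saddle_cell[OF p_pos _ q_pos _ zero_sum_potential_averages_eq[OF pot ne p_pos q_pos]
        ordinal_potential_sink[OF zero_sum_potential_ordinal[OF pot]]] by blast
qed

lemma zero_sum_interior_nash_no_source:
  assumes pot: "zero_sum_potential A B \<Phi>" and ne: "nash A B p q"
    and p_pos: "\<forall>i. 0 < p$i" and q_pos: "\<forall>j. 0 < q$j"
  shows "\<not> is_source A B (i, j)"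
proof
  assume source: "is_source A B (i, j)"
  have sums: "(\<Sum>i\<in>UNIV. p$i) = 1" "(\<Sum>j\<in>UNIV. q$j) = 1"
    using ne by (auto simp: nash_def simplex3_sum)
  have "(\<Sum>j'\<in>UNIV. - \<Phi> (i, j') * q$j') = (\<Sum>i'\<in>UNIV. p$i' * - \<Phi> (i', j))"
    using zero_sum_potential_averages_eq[OF pot ne p_pos q_pos] by (simp add: sum_negf)
  then show False
    by (rule no_strict_saddle_cell[OF p_pos sums(1) q_pos sums(2)])
      (use ordinal_potential_source[OF zero_sum_potential_ordinal[OF pot] source] in auto)
qed

theorem mainTheorem3:
  fixes A B :: mat3 and p0 q0 :: "real^3"
  assumes zs: "zero_sum A B"
    and gen_A: "\<forall>i i' j. i \<noteq> i' \<longrightarrow> A$i$j \<noteq> A$i'$j"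
    and gen_B: "\<forall>i j j'. j \<noteq> j' \<longrightarrow> B$i$j \<noteq> B$i$j'"
    and ne: "nash A B p0 q0"
    and unique: "\<forall>p q. nash A B p q \<longrightarrow> p = p0 \<and> q = q0"
    and interior: "\<forall>i. 0 < p0$i" "\<forall>j. 0 < q0$j"
  shows "(\<nexists>n c. alternating_cycle A B n c) \<and>
         (\<nexists>c. is_sink A B c) \<and>
         (\<nexists>c. is_source A B c)"
proof -
  obtain \<Phi> where pot: "zero_sum_potential A B \<Phi>"
    using zero_sum_potential_exists[OF zs] .
  show ?thesis
    using ordinal_potential_no_alternating_cycle[OF zero_sum_potential_ordinal[OF pot]]
      zero_sum_interior_nash_no_sink[OF pot ne interior]
      zero_sum_interior_nash_no_source[OF pot ne interior]
    by (simp add: split_paired_Ex)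
qed

end
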